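(* Let $k$ be a field, $H=\langle a_1,\dots,a_\ell\rangle$ a numerical semigroup with $\gcd(a_1,\dots,a_\ell)=1$, $R=k[[H]]=k[[t^{a_1},\dots,t^{a_\ell}]]\subseteq k[[t]]$, $f=\mathrm f(H)$ the Frobenius number and $\mathrm{PF}(H)$ the set of pseudo-Frobenius numbers, and $K=\sum_{c\in\mathrm{PF}(H)}Rt^{f-c}$. Suppose that $R$ is a $2$-AGL ring. Then $$K/R=\bigoplus_{c\in\mathrm{PF}(H)\setminus\{f\}}R\cdot\overline{t^{f-c}}$$ (an internal direct sum), where $\overline{(\ast)}$ denotes the image in $K/R$.
   Context: $\mathrm f(H)=\max(\mathbb Z\setminus H)$; $\mathrm{PF}(H)=\{n\in\mathbb Z\setminus H: n+a_i\in H \text{ for all } i\}$. $K$ is a canonical fractional ideal of $R$ (i.e. $R\subseteq K\subseteq\overline R=k[[t]]$ and $K\cong\mathrm K_R$). $R$ is $2$-AGL if it has a canonical ideal $I$ (proper ideal $\cong\mathrm K_R$) containing a parameter ideal as a reduction with $\mathrm e_1(I)=\mathrm e_0(I)-\ell_R(R/I)+2$; equivalently $\ell_R(R[K]/K)=2$. *)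

theory Defs
  imports "HOL-Computational_Algebra.Formal_Power_Series"
begin

definition sgp_gen :: "nat list \<Rightarrow> int set" where
  "sgp_gen a = {int (\<Sum>i<length a. c i * a ! i) | c. True}"

definition frob :: "int set \<Rightarrow> int" where
  "frob H = (GREATEST n. n \<notin> H)"

definition PF :: "nat list \<Rightarrow> int set" where
  "PF a = {n. n \<notin> sgp_gen a \<and> (\<forall>i<length a. n + int (a ! i) \<in> sgp_gen a)}"

definition sgp_ring :: "int set \<Rightarrow> 'a::field fps set" where
  "sgp_ring H = {p. \<forall>n. fps_nth p n \<noteq> 0 \<longrightarrow> int n \<in> H}"

text \<open>Monomial t^m (m an integer, used only for m >= 0).\<close>
definition tpow :: "int \<Rightarrow> 'a::field fps" where
  "tpow m = fps_X ^ nat m"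

definition canon_K :: "nat list \<Rightarrow> 'a::field fps set" where
  "canon_K a = {x. \<exists>r. (\<forall>c\<in>PF a. r c \<in> sgp_ring (sgp_gen a)) \<and>
      x = (\<Sum>c\<in>PF a. r c * tpow (frob (sgp_gen a) - c))}"

definition is_submod :: "'a::field fps set \<Rightarrow> 'a fps set \<Rightarrow> bool" where
  "is_submod R M \<longleftrightarrow> 0 \<in> M \<and> (\<forall>x\<in>M. \<forall>y\<in>M. x + y \<in> M) \<and> (\<forall>r\<in>R. \<forall>x\<in>M. r * x \<in> M)"

definition mod_length_eq :: "'a::field fps set \<Rightarrow> 'a fps set \<Rightarrow> 'a fps set \<Rightarrow> nat \<Rightarrow> bool" where
  "mod_length_eq R N M n \<longleftrightarrow> (\<exists>C::nat \<Rightarrow> 'a fps set. C 0 = N \<and> C n = M \<and>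
      (\<forall>i\<le>n. is_submod R (C i)) \<and>
      (\<forall>i<n. C i \<subset> C (Suc i) \<and>
         \<not> (\<exists>L. is_submod R L \<and> C i \<subset> L \<and> L \<subset> C (Suc i))))"

definition ring_adj :: "'a::field fps set \<Rightarrow> 'a fps set \<Rightarrow> 'a fps set" where
  "ring_adj R K = \<Inter>{S. R \<subseteq> S \<and> K \<subseteq> S \<and> 1 \<in> S \<and>
      (\<forall>x\<in>S. \<forall>y\<in>S. x + y \<in> S \<and> x * y \<in> S \<and> - x \<in> S)}"

text \<open>2-AGL, via the equivalent characterization l_R(R[K]/K) = 2.\<close>
definition two_AGL :: "nat list \<Rightarrow> 'a::field itself \<Rightarrow> bool" where
  "two_AGL a _ \<longleftrightarrow> (let R = (sgp_ring (sgp_gen a) :: 'a fps set); K = canon_K a in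
      mod_length_eq R K (ring_adj R K) 2)"

end

(* Part one is bookkeeping: in the sum defining K the summand c = f is r_f t^0, an element of R.
   For independence, suppose the sum over c in G = PF(H) - {f} of r_c t^(f-c) lies in R while one
   summand does not.  Comparing coefficients at a gap n of H, two distinct c0, c1 in G satisfy
   h_i = n - (f - c_i) in H.  The pseudo-Frobenius property makes 0, h0, h1 distinct, and the
   monomials t^f, t^(f-h0), t^(f-h1) lie in R[K] (each is a product of two monomials of K) while
   every element of K vanishes at these three exponents.  Since R is local with residue field k,
   each step of a composition series of R[K]/K is spanned by one element modulo the previous
   step, so l(R[K]/K) = 2 confines the coefficient vectors at the three exponents to a plane,
   which three distinct unit vectors cannot lie in. *)

theory Submission
  imports Defs
begin

unbundle fps_syntax

section \<open>Semigroup rings\<close>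

definition additive_submonoid :: "int set \<Rightarrow> bool" where
  "additive_submonoid H \<longleftrightarrow> 0 \<in> H \<and> (\<forall>x\<in>H. \<forall>y\<in>H. x + y \<in> H)"

lemma sgp_ring_iff: "p \<in> sgp_ring H \<longleftrightarrow> (\<forall>n. p $ n \<noteq> 0 \<longrightarrow> int n \<in> H)"
  by (simp add: sgp_ring_def)

lemma sgp_ring_0: "0 \<in> sgp_ring H"
  by (simp add: sgp_ring_iff)

lemma sgp_ring_const: "0 \<in> H \<Longrightarrow> fps_const c \<in> sgp_ring H"
  by (simp add: sgp_ring_iff)

lemma sgp_ring_1: "0 \<in> H \<Longrightarrow> 1 \<in> sgp_ring H"
  using sgp_ring_const[of H 1] by simp

lemma sgp_ring_X_power_iff: "(fps_X ^ n :: 'a::field fps) \<in> sgp_ring H \<longleftrightarrow> int n \<in> H"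
  by (auto simp: sgp_ring_iff)

lemma sgp_ring_add: "p \<in> sgp_ring H \<Longrightarrow> q \<in> sgp_ring H \<Longrightarrow> p + q \<in> sgp_ring H"
  unfolding sgp_ring_iff by (metis add.right_neutral add_0 fps_add_nth)

lemma sgp_ring_diff: "p \<in> sgp_ring H \<Longrightarrow> q \<in> sgp_ring H \<Longrightarrow> p - q \<in> sgp_ring H"
  unfolding sgp_ring_iff by (metis diff_self diff_zero fps_sub_nth)

lemma sgp_ring_mult:
  assumes H: "additive_submonoid H" and p: "p \<in> sgp_ring H" and q: "q \<in> sgp_ring H"
  shows "p * q \<in> sgp_ring H"
  unfolding sgp_ring_iff
proof (intro allI impI)
  fix n assume "(p * q) $ n \<noteq> 0"
  then obtain i where i: "i \<le> n" "p $ i * q $ (n - i) \<noteq> 0"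
    unfolding fps_mult_nth by (metis (no_types, lifting) atLeastAtMost_iff mult_zero_left sum.neutral)
  then have "int i \<in> H" "int (n - i) \<in> H" using p q by (auto simp: sgp_ring_iff)
  then have "int (i + (n - i)) \<in> H" using H unfolding additive_submonoid_def by (metis of_nat_add)
  then show "int n \<in> H" using i(1) by simp
qed

lemma fps_right_inverse_constructor_eq_0:
  assumes H: "additive_submonoid H" and p: "p \<in> sgp_ring H" and n: "int n \<notin> H"
  shows "fps_right_inverse_constructor p y n = 0"
  using n
proof (induction n rule: less_induct)
  case (less n)
  have "(\<Sum>i=1..n. p $ i * fps_right_inverse_constructor p y (n - i)) = 0"
  proof (rule sum.neutral, rule ballI, rule ccontr)
    fix i assume i: "i \<in> {1..n}" and "p $ i * fps_right_inverse_constructor p y (n - i) \<noteq> 0"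
    then have "int i \<in> H" "int (n - i) \<in> H"
      using p less.IH[of "n - i"] by (auto simp: sgp_ring_iff)
    then have "int (i + (n - i)) \<in> H" using H unfolding additive_submonoid_def by (metis of_nat_add)
    then show False using i less.prems by simp
  qed
  moreover have "n \<noteq> 0" using less.prems H by (metis additive_submonoid_def of_nat_0)
  ultimately show ?case
    by (cases n) (simp_all del: sum.cl_ivl_Suc)
qed

lemma sgp_ring_inverse:
  assumes "additive_submonoid H" and "p \<in> sgp_ring H"
  shows "inverse p \<in> sgp_ring H"
  using fps_right_inverse_constructor_eq_0[OF assms]
  by (auto simp: sgp_ring_iff fps_inverse_def)

section \<open>Composition series over a semigroup ring\<close>

definition submod_extend :: "'a::field fps set \<Rightarrow> 'a fps set \<Rightarrow> 'a fps \<Rightarrow> 'a fps set" where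
  "submod_extend I A u = {x + r * u | x r. x \<in> A \<and> r \<in> I}"

lemma is_submod_submod_extend:
  assumes A: "is_submod R A" and I0: "0 \<in> I"
    and I_add: "\<And>p q. p \<in> I \<Longrightarrow> q \<in> I \<Longrightarrow> p + q \<in> I"
    and I_mult: "\<And>r p. r \<in> R \<Longrightarrow> p \<in> I \<Longrightarrow> r * p \<in> I"
  shows "is_submod R (submod_extend I A u)"
  unfolding is_submod_def
proof (intro conjI ballI)
  have "0 = 0 + 0 * u" "0 \<in> A" using A by (simp_all add: is_submod_def)
  then show "0 \<in> submod_extend I A u"
    unfolding submod_extend_def using I0 by blast
next
  fix y z assume "y \<in> submod_extend I A u" "z \<in> submod_extend I A u"
  then obtain x1 r1 x2 r2 where yz: "y = x1 + r1 * u" "z = x2 + r2 * u"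
    and "x1 \<in> A" "x2 \<in> A" "r1 \<in> I" "r2 \<in> I"
    unfolding submod_extend_def by blast
  then have "x1 + x2 \<in> A" "r1 + r2 \<in> I" using A I_add by (simp_all add: is_submod_def)
  moreover have "y + z = (x1 + x2) + (r1 + r2) * u"
    unfolding yz by (simp add: algebra_simps)
  ultimately show "y + z \<in> submod_extend I A u"
    unfolding submod_extend_def by blast
next
  fix r y assume r: "r \<in> R" and "y \<in> submod_extend I A u"
  then obtain x1 r1 where y: "y = x1 + r1 * u" and "x1 \<in> A" "r1 \<in> I"
    unfolding submod_extend_def by blast
  then have "r * x1 \<in> A" "r * r1 \<in> I" using A I_mult r by (simp_all add: is_submod_def)
  moreover have "r * y = r * x1 + (r * r1) * u"
    unfolding y by (simp add: algebra_simps)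
  ultimately show "r * y \<in> submod_extend I A u"
    unfolding submod_extend_def by blast
qed

lemma subset_submod_extend: "0 \<in> I \<Longrightarrow> A \<subseteq> submod_extend I A u"
  unfolding submod_extend_def by (metis (mono_tags, lifting) add_0_right mem_Collect_eq mult_zero_left subsetI)

lemma self_in_submod_extend: "0 \<in> A \<Longrightarrow> 1 \<in> I \<Longrightarrow> u \<in> submod_extend I A u"
  unfolding submod_extend_def by (metis (mono_tags, lifting) add_0 mem_Collect_eq mult_1)

lemma submod_extend_subset:
  "is_submod R B \<Longrightarrow> A \<subseteq> B \<Longrightarrow> u \<in> B \<Longrightarrow> I \<subseteq> R \<Longrightarrow> submod_extend I A u \<subseteq> B"
  unfolding submod_extend_def is_submod_def by blast

definition sgp_max_ideal :: "int set \<Rightarrow> 'a::field fps set" where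
  "sgp_max_ideal H = {p \<in> sgp_ring H. p $ 0 = 0}"

lemma not_in_submod_extend_sgp_max_ideal:
  assumes H: "additive_submonoid H" and A: "is_submod (sgp_ring H) A" and u: "u \<notin> A"
  shows "u \<notin> submod_extend (sgp_max_ideal H) A u"
proof
  assume "u \<in> submod_extend (sgp_max_ideal H) A u"
  then obtain x m where x: "x \<in> A" and m: "m \<in> sgp_ring H" "m $ 0 = 0" and "u = x + m * u"
    unfolding submod_extend_def sgp_max_ideal_def by blast
  then have "(1 - m) * u = x" by (simp add: algebra_simps)
  moreover have "inverse (1 - m) * (1 - m) = 1"
    using m(2) by (simp add: inverse_mult_eq_1)
  ultimately have "u = inverse (1 - m) * x"
    by (metis mult.assoc mult_1)
  moreover have "inverse (1 - m) \<in> sgp_ring H"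
    using H m(1) by (simp add: sgp_ring_inverse sgp_ring_diff sgp_ring_1 additive_submonoid_def)
  ultimately have "u \<in> A" using A x by (simp add: is_submod_def)
  then show False using u by blast
qed

lemma simple_quotient_spanned:
  assumes H: "additive_submonoid H"
    and A: "is_submod (sgp_ring H) A" and B: "is_submod (sgp_ring H) B" and AB: "A \<subset> B"
    and simple: "\<not> (\<exists>L. is_submod (sgp_ring H) L \<and> A \<subset> L \<and> L \<subset> B)"
  shows "\<exists>u. \<forall>b\<in>B. \<exists>x\<in>A. \<exists>c. b = x + fps_const c * u"
proof -
  let ?R = "sgp_ring H" and ?m = "sgp_max_ideal H"
  obtain u where u: "u \<in> B" "u \<notin> A" using AB by blast
  have H0: "0 \<in> H" and A0: "0 \<in> A" using H A by (simp_all add: additive_submonoid_def is_submod_def)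
  \<comment> \<open>A + R u = B and, as u is not in A + m u, A + m u = A; hence B = A + k u\<close>
  have m0: "0 \<in> ?m" by (simp add: sgp_max_ideal_def sgp_ring_0)
  have "is_submod ?R (submod_extend ?R A u)"
    by (rule is_submod_submod_extend[OF A sgp_ring_0 sgp_ring_add sgp_ring_mult[OF H]])
  moreover have "A \<subset> submod_extend ?R A u"
    using subset_submod_extend[OF sgp_ring_0] self_in_submod_extend[OF A0 sgp_ring_1[OF H0]] u(2)
    by blast
  moreover have "submod_extend ?R A u \<subseteq> B"
    using B AB u by (intro submod_extend_subset) auto
  ultimately have RB: "submod_extend ?R A u = B"
    using simple by blast
  have "is_submod ?R (submod_extend ?m A u)"
    by (rule is_submod_submod_extend[OF A m0])
      (auto simp: sgp_max_ideal_def sgp_ring_add sgp_ring_mult[OF H])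
  moreover have "submod_extend ?m A u \<subset> B"
    using B AB u not_in_submod_extend_sgp_max_ideal[OF H A u(2)]
    by (intro psubsetI submod_extend_subset) (auto simp: sgp_max_ideal_def)
  ultimately have mA: "submod_extend ?m A u = A"
    using simple subset_submod_extend[OF m0, of A u] by blast
  show ?thesis
  proof (intro exI ballI)
    fix b assume "b \<in> B"
    then obtain x r where b: "b = x + r * u" and x: "x \<in> A" and r: "r \<in> ?R"
      unfolding RB[symmetric] submod_extend_def by blast
    have "x + (r - fps_const (r $ 0)) * u \<in> submod_extend ?m A u"
      using x r sgp_ring_diff[OF r sgp_ring_const[OF H0]]
      unfolding submod_extend_def sgp_max_ideal_def by force
    moreover have "b = (x + (r - fps_const (r $ 0)) * u) + fps_const (r $ 0) * u"
      unfolding b by (simp add: algebra_simps)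
    ultimately show "\<exists>x\<in>A. \<exists>c. b = x + fps_const c * u" using mA by blast
  qed
qed

lemma mod_length_eq_spanned:
  assumes H: "additive_submonoid H" and len: "mod_length_eq (sgp_ring H) N M n"
  shows "\<exists>u. \<forall>b\<in>M. \<exists>x\<in>N. \<exists>c. b = x + (\<Sum>i<n. fps_const (c i) * u i)"
proof -
  obtain C where C0: "C 0 = N" and Cn: "C n = M" and sub: "\<forall>i\<le>n. is_submod (sgp_ring H) (C i)"
    and step: "\<forall>i<n. C i \<subset> C (Suc i) \<and>
                     \<not> (\<exists>L. is_submod (sgp_ring H) L \<and> C i \<subset> L \<and> L \<subset> C (Suc i))"
    using len unfolding mod_length_eq_def by blast
  have "\<forall>i. \<exists>u. i < n \<longrightarrow> (\<forall>b\<in>C (Suc i). \<exists>x\<in>C i. \<exists>c. b = x + fps_const c * u)"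
  proof
    fix i
    show "\<exists>u. i < n \<longrightarrow> (\<forall>b\<in>C (Suc i). \<exists>x\<in>C i. \<exists>c. b = x + fps_const c * u)"
    proof (cases "i < n")
      case True
      then have "\<exists>u. \<forall>b\<in>C (Suc i). \<exists>x\<in>C i. \<exists>c. b = x + fps_const c * u"
        using sub step by (intro simple_quotient_spanned[OF H]) auto
      then show ?thesis by simp
    qed simp
  qed
  from choice[OF this] obtain u :: "nat \<Rightarrow> 'a fps"
    where u: "\<And>i b. i < n \<Longrightarrow> b \<in> C (Suc i) \<Longrightarrow> \<exists>x\<in>C i. \<exists>c. b = x + fps_const c * u i"
    by blast
  have "\<forall>b\<in>C i. \<exists>x\<in>N. \<exists>c. b = x + (\<Sum>j<i. fps_const (c j) * u j)" if "i \<le> n" for i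
    using that
  proof (induction i)
    case 0
    then show ?case using C0 by simp
  next
    case (Suc i)
    show ?case
    proof
      fix b assume "b \<in> C (Suc i)"
      then obtain y c' where y: "y \<in> C i" and b: "b = y + fps_const c' * u i"
        using u Suc.prems by (meson Suc_le_lessD)
      obtain x c where "x \<in> N" and "y = x + (\<Sum>j<i. fps_const (c j) * u j)"
        using Suc y by (meson Suc_leD)
      then have "b = x + (\<Sum>j<Suc i. fps_const ((c(i := c')) j) * u j)"
        unfolding b by (simp add: add.assoc)
      then show "\<exists>x\<in>N. \<exists>c. b = x + (\<Sum>j<Suc i. fps_const (c j) * u j)"
        using \<open>x \<in> N\<close> by blast
    qed
  qed
  then show ?thesis using Cn by blast
qed

lemma mod_length_eq_nth_spanned:
  assumes "additive_submonoid H" and "mod_length_eq (sgp_ring H) N M n"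
  shows "\<exists>u. \<forall>b\<in>M. \<exists>c. \<forall>e. (\<forall>x\<in>N. x $ e = 0) \<longrightarrow> b $ e = (\<Sum>i<n. c i * u i $ e)"
proof -
  obtain u where u: "\<forall>b\<in>M. \<exists>x\<in>N. \<exists>c. b = x + (\<Sum>i<n. fps_const (c i) * u i)"
    using mod_length_eq_spanned[OF assms] by blast
  have coeffs: "\<exists>c. \<forall>e. (\<forall>x\<in>N. x $ e = 0) \<longrightarrow> b $ e = (\<Sum>i<n. c i * u i $ e)"
    if "b \<in> M" for b
  proof -
    from bspec[OF u \<open>b \<in> M\<close>] obtain x c
      where x: "x \<in> N" and b: "b = x + (\<Sum>i<n. fps_const (c i) * u i)"
      by blast
    have "\<forall>e. (\<forall>x\<in>N. x $ e = 0) \<longrightarrow> b $ e = (\<Sum>i<n. c i * u i $ e)"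
      using x unfolding b by (simp add: fps_sum_nth)
    then show ?thesis by (rule exI[of _ c])
  qed
  show ?thesis by (intro exI[of _ u] ballI coeffs)
qed

lemma delta3_not_rank2:
  fixes U V :: "'b \<Rightarrow> 'a::field"
  assumes dist: "e1 \<noteq> e2" "e1 \<noteq> e3" "e2 \<noteq> e3"
    and eq: "\<forall>j\<in>{e1, e2, e3}. \<forall>e\<in>{e1, e2, e3}. m j * U e + l j * V e = (if e = j then 1 else 0)"
  shows False
proof -
  let ?d = "\<lambda>j e. m j * U e + l j * V e"
  \<comment> \<open>the determinant of the product of a 3x2 and a 2x3 matrix vanishes\<close>
  have "?d e1 e1 * (?d e2 e2 * ?d e3 e3 - ?d e2 e3 * ?d e3 e2)
      - ?d e1 e2 * (?d e2 e1 * ?d e3 e3 - ?d e2 e3 * ?d e3 e1)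
      + ?d e1 e3 * (?d e2 e1 * ?d e3 e2 - ?d e2 e2 * ?d e3 e1) = 0"
    by algebra
  then show False using dist eq by simp
qed

lemma mod_length_two_no_three_monomials:
  fixes M N :: "'a::field fps set"
  assumes H: "additive_submonoid H" and len: "mod_length_eq (sgp_ring H) N M 2"
    and dist: "e1 \<noteq> e2" "e1 \<noteq> e3" "e2 \<noteq> e3"
    and vanish: "\<And>x e. x \<in> N \<Longrightarrow> e \<in> {e1, e2, e3} \<Longrightarrow> x $ e = 0"
    and mono: "\<And>e. e \<in> {e1, e2, e3} \<Longrightarrow> fps_X ^ e \<in> M"
  shows False
proof -
  obtain u where u: "\<forall>b\<in>M. \<exists>c. \<forall>e. (\<forall>x\<in>N. x $ e = 0) \<longrightarrow> b $ e = (\<Sum>i<(2::nat). c i * u i $ e)"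
    using mod_length_eq_nth_spanned[OF H len] by blast
  have "\<forall>j\<in>{e1, e2, e3}. \<exists>c::nat \<Rightarrow> 'a. \<forall>e\<in>{e1, e2, e3}.
      c 0 * u 0 $ e + c 1 * u 1 $ e = (fps_X ^ j :: 'a fps) $ e"
  proof
    fix j assume j: "j \<in> {e1, e2, e3}"
    obtain c where c: "\<forall>e. (\<forall>x\<in>N. x $ e = 0) \<longrightarrow>
        (fps_X ^ j :: 'a fps) $ e = (\<Sum>i<(2::nat). c i * u i $ e)"
      using u mono[OF j] by blast
    have "\<forall>e\<in>{e1, e2, e3}. c 0 * u 0 $ e + c 1 * u 1 $ e = (fps_X ^ j :: 'a fps) $ e"
      using c vanish by (simp add: eval_nat_numeral)
    then show "\<exists>c::nat \<Rightarrow> 'a. \<forall>e\<in>{e1, e2, e3}. c 0 * u 0 $ e + c 1 * u 1 $ e = (fps_X ^ j :: 'a fps) $ e"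
      by (rule exI[of _ c])
  qed
  from bchoice[OF this] obtain c :: "nat \<Rightarrow> nat \<Rightarrow> 'a" where c: "\<forall>j\<in>{e1, e2, e3}. \<forall>e\<in>{e1, e2, e3}.
      c j 0 * u 0 $ e + c j 1 * u 1 $ e = (fps_X ^ j :: 'a fps) $ e"
    by blast
  then have "\<forall>j\<in>{e1, e2, e3}. \<forall>e\<in>{e1, e2, e3}.
      c j 0 * u 0 $ e + c j 1 * u 1 $ e = (if e = j then 1 else 0)"
    by (simp only: fps_X_power_nth)
  then show False by (rule delta3_not_rank2[OF dist])
qed

section \<open>Numerical semigroups and pseudo-Frobenius numbers\<close>

lemma sgp_gen_iff: "n \<in> sgp_gen a \<longleftrightarrow> (\<exists>c. n = int (\<Sum>i<length a. c i * a ! i))"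
  by (auto simp: sgp_gen_def)

lemma sgp_gen_nonneg: "n \<in> sgp_gen a \<Longrightarrow> 0 \<le> n"
  by (metis sgp_gen_iff of_nat_0_le_iff)

lemma zero_in_sgp_gen: "0 \<in> sgp_gen a"
  unfolding sgp_gen_iff by (rule exI[of _ "\<lambda>_. 0"]) simp

lemma sgp_gen_add: "x \<in> sgp_gen a \<Longrightarrow> y \<in> sgp_gen a \<Longrightarrow> x + y \<in> sgp_gen a"
proof -
  assume "x \<in> sgp_gen a" "y \<in> sgp_gen a"
  then obtain c1 c2 where "x = int (\<Sum>i<length a. c1 i * a ! i)" "y = int (\<Sum>i<length a. c2 i * a ! i)"
    by (auto simp: sgp_gen_iff)
  then have "x + y = int (\<Sum>i<length a. (c1 i + c2 i) * a ! i)"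
    by (simp add: algebra_simps sum.distrib)
  then show ?thesis unfolding sgp_gen_iff by (intro exI[of _ "\<lambda>i. c1 i + c2 i"])
qed

lemma additive_submonoid_sgp_gen: "additive_submonoid (sgp_gen a)"
  by (simp add: additive_submonoid_def zero_in_sgp_gen sgp_gen_add)

lemma generator_in_sgp_gen:
  assumes "i < length a"
  shows "int (a ! i) \<in> sgp_gen a"
proof -
  have "(\<Sum>j<length a. (if j = i then 1 else 0) * a ! j) = (\<Sum>j<length a. if j = i then a ! j else 0)"
    by (rule sum.cong) auto
  also have "\<dots> = a ! i" using assms by simp
  finally show ?thesis unfolding sgp_gen_iff by (intro exI[of _ "\<lambda>j. if j = i then 1 else 0"]) simp
qed

lemma sgp_gen_mult: "x \<in> sgp_gen a \<Longrightarrow> int k * x \<in> sgp_gen a"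
  by (induction k) (auto simp: zero_in_sgp_gen algebra_simps intro: sgp_gen_add)

lemma sgp_gen_minus_generator:
  assumes "h \<in> sgp_gen a" "h \<noteq> 0"
  shows "\<exists>i<length a. h - int (a ! i) \<in> sgp_gen a"
proof -
  obtain c where c: "h = int (\<Sum>i<length a. c i * a ! i)" using assms(1) by (auto simp: sgp_gen_iff)
  then have "(\<Sum>i<length a. c i * a ! i) \<noteq> 0" using assms(2) by (metis of_nat_0)
  then obtain j where "j < length a" "c j * a ! j \<noteq> 0" by (meson lessThan_iff sum.neutral)
  then have j: "j < length a" "c j \<noteq> 0" by simp_all
  define c' where "c' = c(j := c j - 1)"
  have "(\<Sum>i<length a. c i * a ! i) = (\<Sum>i<length a. c' i * a ! i + (if i = j then a ! i else 0))"
    using j by (intro sum.cong) (auto simp: c'_def algebra_simps)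
  also have "\<dots> = (\<Sum>i<length a. c' i * a ! i) + a ! j"
    using j by (simp add: sum.distrib)
  finally have "h - int (a ! j) = int (\<Sum>i<length a. c' i * a ! i)" using c by simp
  then show ?thesis using j unfolding sgp_gen_iff by (intro exI[of _ j]) (auto intro!: exI[of _ c'])
qed

lemma PF_add_nonzero:
  assumes "c \<in> PF a" "h \<in> sgp_gen a" "h \<noteq> 0"
  shows "c + h \<in> sgp_gen a"
proof -
  obtain i where i: "i < length a" "h - int (a ! i) \<in> sgp_gen a"
    using sgp_gen_minus_generator assms(2,3) by blast
  have "c + int (a ! i) \<in> sgp_gen a" using assms(1) i(1) by (simp add: PF_def)
  from sgp_gen_add[OF this i(2)] show ?thesis by simp
qed

lemma Gcd_list_bezout: "\<exists>z::nat \<Rightarrow> int. (\<Sum>i<length a. z i * int (a ! i)) = int (Gcd (set a))"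
proof (induction a)
  case Nil
  then show ?case by simp
next
  case (Cons x xs)
  then obtain z where z: "(\<Sum>i<length xs. z i * int (xs ! i)) = int (Gcd (set xs))" by blast
  obtain u v where uv: "u * int x + v * int (Gcd (set xs)) = gcd (int x) (int (Gcd (set xs)))"
    using bezout_int by blast
  define z' where "z' = (\<lambda>i. case i of 0 \<Rightarrow> u | Suc j \<Rightarrow> v * z j)"
  have "(\<Sum>i<length (x # xs). z' i * int ((x # xs) ! i))
      = u * int x + v * (\<Sum>i<length xs. z i * int (xs ! i))"
    by (simp add: z'_def sum.lessThan_Suc_shift sum_distrib_left algebra_simps del: sum.lessThan_Suc)
  also have "\<dots> = int (Gcd (set (x # xs)))" using uv z by simp
  finally show ?case by blast
qed

lemma sgp_gen_cofinite:
  assumes "Gcd (set a) = 1"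
  shows "\<exists>N. \<forall>n\<ge>N. n \<in> sgp_gen a"
proof -
  obtain z where z: "(\<Sum>i<length a. z i * int (a ! i)) = 1" using Gcd_list_bezout[of a] assms by auto
  define P where "P = int (\<Sum>i<length a. nat (max (z i) 0) * a ! i)"
  define Q where "Q = int (\<Sum>i<length a. nat (max (- z i) 0) * a ! i)"
  have P: "P \<in> sgp_gen a" and Q: "Q \<in> sgp_gen a"
    unfolding P_def Q_def sgp_gen_iff by (rule exI, rule refl)+
  have "P - Q = (\<Sum>i<length a. (max (z i) 0 - max (- z i) 0) * int (a ! i))"
    unfolding P_def Q_def by (simp add: of_nat_sum sum_subtractf algebra_simps)
  also have "\<dots> = 1"
    unfolding z[symmetric] by (rule sum.cong) (auto simp: max_def)
  finally have PQ: "P = Q + 1" by simp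
  \<comment> \<open>every n \<ge> Q^2 is (q - r) Q + r P with q = n div Q \<ge> Q > r = n mod Q\<close>
  have "n \<in> sgp_gen a" if n: "Q * Q \<le> n" for n
  proof (cases "Q = 0")
    case True
    then show ?thesis using sgp_gen_mult[OF P, of "nat n"] n PQ by simp
  next
    case False
    then have Qpos: "0 < Q" using sgp_gen_nonneg[OF Q] by simp
    define q r where "q = n div Q" and "r = n mod Q"
    have r: "0 \<le> r" "r < Q" using Qpos unfolding r_def by auto
    have "Q \<le> q" using zdiv_mono1[OF n Qpos] Qpos unfolding q_def by simp
    then have "int (nat (q - r)) * Q + int (nat r) * P \<in> sgp_gen a"
      by (intro sgp_gen_add sgp_gen_mult P Q)
    moreover have "n = (q - r) * Q + r * P" using PQ unfolding q_def r_def by (simp add: algebra_simps)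
    ultimately show ?thesis using r \<open>Q \<le> q\<close> by simp
  qed
  then show ?thesis by blast
qed

lemma frob_greatest:
  fixes H :: "int set"
  assumes cofinite: "\<forall>n\<ge>N. n \<in> H" and gap: "m \<notin> H"
  shows frob_notin: "frob H \<notin> H" and le_frob: "n \<notin> H \<Longrightarrow> n \<le> frob H"
proof -
  define F where "F = {k \<in> {m..N}. k \<notin> H}"
  have fin: "finite F" unfolding F_def by (rule finite_subset[of _ "{m..N}"]) auto
  have "m \<le> N" using cofinite gap by (meson linorder_le_cases)
  then have "m \<in> F" using gap unfolding F_def by simp
  then have max_in: "Max F \<in> F" using fin by (intro Max_in) auto
  have greatest: "k \<le> Max F" if "k \<notin> H" for k
  proof (cases "m \<le> k")
    case True
    moreover have "k \<le> N" using that cofinite by (meson linorder_le_cases)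
    ultimately have "k \<in> F" using that unfolding F_def by simp
    then show ?thesis using fin by simp
  next
    case False
    then show ?thesis using Max_ge[OF fin \<open>m \<in> F\<close>] by simp
  qed
  have "frob H = Max F"
    unfolding frob_def using max_in greatest by (intro Greatest_equality) (auto simp: F_def)
  then show "frob H \<notin> H" "n \<notin> H \<Longrightarrow> n \<le> frob H"
    using max_in greatest unfolding F_def by auto
qed

lemma
  assumes "Gcd (set a) = 1"
  shows frob_sgp_gen_notin: "frob (sgp_gen a) \<notin> sgp_gen a"
    and le_frob_sgp_gen: "n \<notin> sgp_gen a \<Longrightarrow> n \<le> frob (sgp_gen a)"
proof -
  obtain N where "\<forall>n\<ge>N. n \<in> sgp_gen a" using sgp_gen_cofinite[OF assms] by blast
  moreover have "-1 \<notin> sgp_gen a" using sgp_gen_nonneg by force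
  ultimately show "frob (sgp_gen a) \<notin> sgp_gen a" "n \<notin> sgp_gen a \<Longrightarrow> n \<le> frob (sgp_gen a)"
    by (rule frob_notin, rule le_frob)
qed

lemma finite_PF:
  assumes "Gcd (set a) = 1"
  shows "finite (PF a)"
proof -
  have "a \<noteq> []" using assms by auto
  have "PF a \<subseteq> {- int (a ! 0) .. frob (sgp_gen a)}"
  proof
    fix c assume "c \<in> PF a"
    then have "c \<notin> sgp_gen a" "c + int (a ! 0) \<in> sgp_gen a"
      using \<open>a \<noteq> []\<close> unfolding PF_def by auto
    then show "c \<in> {- int (a ! 0) .. frob (sgp_gen a)}"
      using le_frob_sgp_gen[OF assms] sgp_gen_nonneg by force
  qed
  then show ?thesis by (rule finite_subset) simp
qed

lemma PF_minus_frob: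
  assumes "Gcd (set a) = 1" and "c \<in> PF a - {frob (sgp_gen a)}"
  shows "c \<notin> sgp_gen a" and "frob (sgp_gen a) - c \<notin> sgp_gen a" and "0 \<le> c" and "c \<le> frob (sgp_gen a)"
proof -
  let ?f = "frob (sgp_gen a)"
  show c: "c \<notin> sgp_gen a" using assms(2) by (simp add: PF_def)
  then show "c \<le> ?f" using le_frob_sgp_gen[OF assms(1)] by blast
  show fc: "?f - c \<notin> sgp_gen a"
  proof
    assume "?f - c \<in> sgp_gen a"
    then have "c + (?f - c) \<in> sgp_gen a" using assms(2) by (intro PF_add_nonzero) auto
    then show False using frob_sgp_gen_notin[OF assms(1)] by simp
  qed
  show "0 \<le> c" using le_frob_sgp_gen[OF assms(1) fc] by simp
qed

lemma PF_dominates: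
  assumes pos: "\<forall>x\<in>set a. x > 0" and gcd1: "Gcd (set a) = 1" and g: "g \<notin> sgp_gen a"
  shows "\<exists>d\<in>PF a. d - g \<in> sgp_gen a"
  using g
proof (induction "nat (frob (sgp_gen a) - g)" arbitrary: g rule: less_induct)
  case less
  show ?case
  proof (cases "g \<in> PF a")
    case True
    then show ?thesis using zero_in_sgp_gen by force
  next
    case False
    then obtain i where i: "i < length a" "g + int (a ! i) \<notin> sgp_gen a"
      using less.prems unfolding PF_def by auto
    have "a ! i > 0" using pos i(1) by simp
    moreover have "g + int (a ! i) \<le> frob (sgp_gen a)" using le_frob_sgp_gen[OF gcd1 i(2)] .
    ultimately obtain d where d: "d \<in> PF a" "d - (g + int (a ! i)) \<in> sgp_gen a"
      using less.hyps[OF _ i(2)] by force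
    from sgp_gen_add[OF d(2) generator_in_sgp_gen[OF i(1)]] show ?thesis using d(1) by auto
  qed
qed

section \<open>Monomials in K and in R[K]\<close>

lemma tpow_add: "0 \<le> m \<Longrightarrow> 0 \<le> k \<Longrightarrow> tpow (m + k) = tpow m * tpow k"
  by (simp add: tpow_def nat_add_distrib power_add)

lemma nth_mult_tpow_nonzero:
  assumes r: "r \<in> sgp_ring H" and m: "0 \<le> m" and nz: "(r * tpow m) $ n \<noteq> 0"
  shows "int n - m \<in> H"
proof -
  from nz have "nat m \<le> n" "r $ (n - nat m) \<noteq> 0"
    by (auto simp: tpow_def fps_X_power_mult_right_nth split: if_splits)
  then show ?thesis using r m by (auto simp: sgp_ring_iff)
qed

lemma canon_K_nth_eq_0:
  assumes gcd1: "Gcd (set a) = 1" and x: "x \<in> canon_K a"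
    and e: "frob (sgp_gen a) - int e \<in> sgp_gen a"
  shows "x $ e = 0"
proof -
  let ?H = "sgp_gen a" and ?f = "frob (sgp_gen a)"
  obtain r where r: "\<forall>c\<in>PF a. r c \<in> sgp_ring ?H" and x: "x = (\<Sum>c\<in>PF a. r c * tpow (?f - c))"
    using x unfolding canon_K_def by blast
  have "(r c * tpow (?f - c)) $ e = 0" if c: "c \<in> PF a" for c
  proof (rule ccontr)
    have cH: "c \<notin> ?H" using c by (simp add: PF_def)
    assume "(r c * tpow (?f - c)) $ e \<noteq> 0"
    then have "int e - (?f - c) \<in> ?H"
      using r c le_frob_sgp_gen[OF gcd1 cH] by (intro nth_mult_tpow_nonzero) auto
    from sgp_gen_add[OF this e] have "c \<in> ?H" by simp
    then show False using cH by blast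
  qed
  then show ?thesis by (simp add: x fps_sum_nth)
qed

lemma tpow_in_canon_K:
  assumes pos: "\<forall>x\<in>set a. x > 0" and gcd1: "Gcd (set a) = 1"
    and m: "0 \<le> m" and gap: "frob (sgp_gen a) - m \<notin> sgp_gen a"
  shows "(tpow m :: 'a::field fps) \<in> canon_K a"
proof -
  let ?H = "sgp_gen a" and ?f = "frob (sgp_gen a)"
  obtain d where d: "d \<in> PF a" "d - (?f - m) \<in> ?H"
    using PF_dominates[OF pos gcd1 gap] by blast
  have "d \<le> ?f" using d(1) le_frob_sgp_gen[OF gcd1] by (simp add: PF_def)
  define r :: "int \<Rightarrow> 'a fps" where "r c = (if c = d then tpow (d - (?f - m)) else 0)" for c
  have rR: "\<forall>c\<in>PF a. r c \<in> sgp_ring ?H"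
    using d(2) sgp_gen_nonneg[OF d(2)] by (simp add: r_def tpow_def sgp_ring_X_power_iff sgp_ring_0)
  have "(\<Sum>c\<in>PF a. r c * tpow (?f - c))
      = (\<Sum>c\<in>PF a. if c = d then tpow (d - (?f - m)) * tpow (?f - d) else 0)"
    by (rule sum.cong) (auto simp: r_def)
  also have "\<dots> = tpow (d - (?f - m)) * tpow (?f - d)"
    using d(1) finite_PF[OF gcd1] by simp
  also have "\<dots> = tpow m"
    using sgp_gen_nonneg[OF d(2)] \<open>d \<le> ?f\<close> by (subst tpow_add[symmetric]) auto
  finally have "tpow m = (\<Sum>c\<in>PF a. r c * tpow (?f - c))" ..
  with rR show ?thesis unfolding canon_K_def by (intro CollectI exI[of _ r] conjI)
qed

lemma mult_in_ring_adj: "p \<in> K \<Longrightarrow> q \<in> K \<Longrightarrow> p * q \<in> ring_adj R K"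
  unfolding ring_adj_def by blast

lemma tpow_in_ring_adj_canon_K:
  assumes pos: "\<forall>x\<in>set a. x > 0" and gcd1: "Gcd (set a) = 1"
    and "0 \<le> m" "0 \<le> k"
    and "frob (sgp_gen a) - m \<notin> sgp_gen a" "frob (sgp_gen a) - k \<notin> sgp_gen a"
  shows "(tpow (m + k) :: 'a::field fps) \<in> ring_adj R (canon_K a)"
  using assms by (simp add: tpow_add mult_in_ring_adj tpow_in_canon_K)

lemma tpow_frob_in_ring_adj:
  fixes a :: "nat list"
  defines "f \<equiv> frob (sgp_gen a)"
  assumes pos: "\<forall>x\<in>set a. x > 0" and gcd1: "Gcd (set a) = 1"
    and c: "c \<in> PF a - {f}" and n: "int n \<notin> sgp_gen a"
  shows "(tpow f :: 'a::field fps) \<in> ring_adj R (canon_K a)"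
    and "(tpow (f - (int n - (f - c))) :: 'a fps) \<in> ring_adj R (canon_K a)"
proof -
  note c_props = PF_minus_frob[OF gcd1 c[unfolded f_def]]
  have "int n \<le> f" using le_frob_sgp_gen[OF gcd1 n] unfolding f_def .
  \<comment> \<open>t^f = t^(f-c) t^c and t^(f-(n-(f-c))) = t^(f-c) t^(f-n), all factors lying in K\<close>
  have "(tpow ((f - c) + c) :: 'a fps) \<in> ring_adj R (canon_K a)"
    "(tpow ((f - c) + (f - int n)) :: 'a fps) \<in> ring_adj R (canon_K a)"
    using c_props n \<open>int n \<le> f\<close> unfolding f_def
    by (intro tpow_in_ring_adj_canon_K[OF pos gcd1]; simp)+
  then show "(tpow f :: 'a fps) \<in> ring_adj R (canon_K a)"
    "(tpow (f - (int n - (f - c))) :: 'a fps) \<in> ring_adj R (canon_K a)"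
    by (simp_all add: algebra_simps)
qed

lemma PF_diff_notin:
  assumes "c \<in> PF a" "c' \<in> PF a" "c \<noteq> c'"
  shows "c' - c \<notin> sgp_gen a"
proof
  assume "c' - c \<in> sgp_gen a"
  then have "c + (c' - c) \<in> sgp_gen a" using assms by (intro PF_add_nonzero) auto
  then show False using assms(2) by (simp add: PF_def)
qed

lemma three_monomials_in_ring_adj:
  fixes a :: "nat list"
  defines "H \<equiv> sgp_gen a" and "f \<equiv> frob (sgp_gen a)"
  assumes pos: "\<forall>x\<in>set a. x > 0" and gcd1: "Gcd (set a) = 1"
    and c0: "c0 \<in> PF a - {f}" and c1: "c1 \<in> PF a - {f}" and "c0 \<noteq> c1"
    and n: "int n \<notin> H" and h0: "int n - (f - c0) \<in> H" and h1: "int n - (f - c1) \<in> H"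
  shows "\<exists>e1 e2 e3. e1 \<noteq> e2 \<and> e1 \<noteq> e3 \<and> e2 \<noteq> e3 \<and>
           (\<forall>e\<in>{e1, e2, e3}. f - int e \<in> H \<and> (fps_X ^ e :: 'a::field fps) \<in> ring_adj R (canon_K a))"
proof -
  let ?hs = "{0, int n - (f - c0), int n - (f - c1)}"
  have in_adj: "(tpow (f - h) :: 'a fps) \<in> ring_adj R (canon_K a)" if "h \<in> ?hs" for h
    using that tpow_frob_in_ring_adj[OF pos gcd1 c0[unfolded f_def] n[unfolded H_def]]
      tpow_frob_in_ring_adj(2)[OF pos gcd1 c1[unfolded f_def] n[unfolded H_def]]
    unfolding f_def by auto
  have nonneg: "0 \<le> f - h" if "h \<in> ?hs" for h
    using that PF_minus_frob(4)[OF gcd1 c0[unfolded f_def]] PF_minus_frob(4)[OF gcd1 c1[unfolded f_def]]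
      le_frob_sgp_gen[OF gcd1 n[unfolded H_def]]
    unfolding f_def by auto
  have ne0: "int n - (f - c) \<noteq> 0"
    if "c \<in> PF a" "c' \<in> PF a" "c \<noteq> c'" "int n - (f - c') \<in> H" for c c'
  proof
    assume "int n - (f - c) = 0"
    then have "int n - (f - c') = c' - c" by simp
    then show False using that(4) PF_diff_notin[OF that(1-3)] unfolding H_def by metis
  qed
  have ne: "int n - (f - c0) \<noteq> 0" "int n - (f - c1) \<noteq> 0" "int n - (f - c0) \<noteq> int n - (f - c1)"
    using ne0[of c0 c1] ne0[of c1 c0] c0 c1 \<open>c0 \<noteq> c1\<close> h0 h1 by auto
  let ?e = "\<lambda>h. nat (f - h)"
  show ?thesis
  proof (rule exI[of _ "?e 0"], rule exI[of _ "?e (int n - (f - c0))"],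
      rule exI[of _ "?e (int n - (f - c1))"], intro conjI ballI)
    show "?e 0 \<noteq> ?e (int n - (f - c0))" "?e 0 \<noteq> ?e (int n - (f - c1))"
      "?e (int n - (f - c0)) \<noteq> ?e (int n - (f - c1))"
      using ne nonneg[of 0] nonneg[of "int n - (f - c0)"] nonneg[of "int n - (f - c1)"]
      by (simp_all add: eq_nat_nat_iff)
  next
    fix e assume "e \<in> {?e 0, ?e (int n - (f - c0)), ?e (int n - (f - c1))}"
    then obtain h where h: "h \<in> ?hs" and e: "e = nat (f - h)" by blast
    show "f - int e \<in> H" using h h0 h1 nonneg[OF h] unfolding e H_def by (auto simp: zero_in_sgp_gen)
    show "(fps_X ^ e :: 'a fps) \<in> ring_adj R (canon_K a)" using in_adj[OF h] unfolding e tpow_def .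
  qed
qed

lemma two_AGL_shifted_semigroups_disjoint:
  fixes a :: "nat list"
  defines "H \<equiv> sgp_gen a" and "f \<equiv> frob (sgp_gen a)"
  assumes pos: "\<forall>x\<in>set a. x > 0" and gcd1: "Gcd (set a) = 1" and agl: "two_AGL a TYPE('a::field)"
    and c0: "c0 \<in> PF a - {f}" and c1: "c1 \<in> PF a - {f}" and "c0 \<noteq> c1"
    and n: "int n \<notin> H" and h0: "int n - (f - c0) \<in> H" and h1: "int n - (f - c1) \<in> H"
  shows False
proof -
  let ?R = "sgp_ring (sgp_gen a) :: 'a fps set"
  obtain e1 e2 e3 where dist: "e1 \<noteq> e2" "e1 \<noteq> e3" "e2 \<noteq> e3"
    and e: "\<forall>e\<in>{e1, e2, e3}. f - int e \<in> H \<and> (fps_X ^ e :: 'a fps) \<in> ring_adj ?R (canon_K a)"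
    using three_monomials_in_ring_adj[OF pos gcd1 c0[unfolded f_def] c1[unfolded f_def] \<open>c0 \<noteq> c1\<close>
        n[unfolded H_def] h0[unfolded H_def f_def] h1[unfolded H_def f_def]]
    unfolding H_def f_def by blast
  have len: "mod_length_eq ?R (canon_K a) (ring_adj ?R (canon_K a)) 2"
    using agl unfolding two_AGL_def Let_def .
  show False
    by (rule mod_length_two_no_three_monomials[OF additive_submonoid_sgp_gen len dist])
      (use e canon_K_nth_eq_0[OF gcd1] in \<open>auto simp: H_def f_def\<close>)
qed

lemma sum_in_sgp_ring_cancelling_term:
  assumes G: "finite G" and c0: "c0 \<in> G"
    and sum: "(\<Sum>c\<in>G. T c) \<in> sgp_ring H" and T: "T c0 \<notin> sgp_ring H"
  obtains n c1 where "int n \<notin> H" "c1 \<in> G" "c1 \<noteq> c0" "T c0 $ n \<noteq> 0" "T c1 $ n \<noteq> 0"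
proof -
  obtain n where n: "T c0 $ n \<noteq> 0" "int n \<notin> H" using T by (auto simp: sgp_ring_iff)
  have "(\<Sum>c\<in>G. T c $ n) = 0"
    using sum n(2) unfolding sgp_ring_iff by (metis fps_sum_nth)
  then have "T c0 $ n + (\<Sum>c\<in>G - {c0}. T c $ n) = 0"
    by (simp add: sum.remove[OF G c0])
  then have "(\<Sum>c\<in>G - {c0}. T c $ n) \<noteq> 0" using n(1) by auto
  then obtain c1 where "c1 \<in> G - {c0}" "T c1 $ n \<noteq> 0" by (meson sum.neutral)
  then show thesis using n that by blast
qed

lemma canon_K_mod_sgp_ring:
  fixes a :: "nat list"
  defines "R \<equiv> (sgp_ring (sgp_gen a) :: 'a::field fps set)"
    and "f \<equiv> frob (sgp_gen a)" and "G \<equiv> PF a - {frob (sgp_gen a)}"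
  assumes gcd1: "Gcd (set a) = 1" and x: "x \<in> (canon_K a :: 'a fps set)"
  shows "\<exists>r. (\<forall>c\<in>G. r c \<in> R) \<and> x - (\<Sum>c\<in>G. r c * tpow (f - c)) \<in> R"
proof -
  obtain r where r: "\<forall>c\<in>PF a. r c \<in> R" and x: "x = (\<Sum>c\<in>PF a. r c * tpow (f - c))"
    using x unfolding canon_K_def R_def f_def by blast
  have "x - (\<Sum>c\<in>G. r c * tpow (f - c)) \<in> R"
  proof (cases "f \<in> PF a")
    case True
    then have "x = r f * tpow (f - f) + (\<Sum>c\<in>G. r c * tpow (f - c))"
      unfolding x G_def f_def
      using sum.remove[OF finite_PF[OF gcd1] True[unfolded f_def], of "\<lambda>c. r c * tpow (f - c)"]
      by (simp add: f_def)
    then show ?thesis using r True by (simp add: tpow_def)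
  next
    case False
    then show ?thesis using x unfolding G_def f_def R_def by (simp add: sgp_ring_0)
  qed
  moreover have "\<forall>c\<in>G. r c \<in> R" using r unfolding G_def by simp
  ultimately show ?thesis by blast
qed

theorem proposition2p4:
  fixes a :: "nat list"
  assumes pos: "\<forall>x\<in>set a. x > 0"
    and gcd1: "Gcd (set a) = 1"
    and agl: "two_AGL a TYPE('a::field)"
  defines "R \<equiv> (sgp_ring (sgp_gen a) :: 'a fps set)"
    and "f \<equiv> frob (sgp_gen a)"
    and "G \<equiv> PF a - {frob (sgp_gen a)}"
  shows "(\<forall>x\<in>(canon_K a :: 'a fps set). \<exists>r. (\<forall>c\<in>G. r c \<in> R) \<and>
            x - (\<Sum>c\<in>G. r c * tpow (f - c)) \<in> R)
       \<and> (\<forall>r. (\<forall>c\<in>G. r c \<in> R) \<longrightarrow> (\<Sum>c\<in>G. r c * tpow (f - c)) \<in> R \<longrightarrow>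
            (\<forall>c\<in>G. r c * tpow (f - c) \<in> R))"
proof (intro conjI allI ballI impI)
  fix x assume "x \<in> (canon_K a :: 'a fps set)"
  then show "\<exists>r. (\<forall>c\<in>G. r c \<in> R) \<and> x - (\<Sum>c\<in>G. r c * tpow (f - c)) \<in> R"
    unfolding R_def f_def G_def by (rule canon_K_mod_sgp_ring[OF gcd1])
next
  fix r c0
  assume r: "\<forall>c\<in>G. r c \<in> R" and sum: "(\<Sum>c\<in>G. r c * tpow (f - c)) \<in> R" and c0: "c0 \<in> G"
  show "r c0 * tpow (f - c0) \<in> R"
  proof (rule ccontr)
    assume "r c0 * tpow (f - c0) \<notin> R"
    then obtain n c1 where n: "int n \<notin> sgp_gen a" and c1: "c1 \<in> G" "c1 \<noteq> c0"
      and nz: "(r c0 * tpow (f - c0)) $ n \<noteq> 0" "(r c1 * tpow (f - c1)) $ n \<noteq> 0"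
      using sum_in_sgp_ring_cancelling_term[OF _ c0 sum[unfolded R_def]] finite_PF[OF gcd1]
      unfolding R_def G_def by blast
    have "int n - (f - c) \<in> sgp_gen a" if "c \<in> G" "(r c * tpow (f - c)) $ n \<noteq> 0" for c
      using that r PF_minus_frob[OF gcd1] unfolding R_def G_def f_def
      by (intro nth_mult_tpow_nonzero) auto
    then show False
      using two_AGL_shifted_semigroups_disjoint[OF pos gcd1 agl _ _ \<open>c1 \<noteq> c0\<close>[symmetric] n]
        c0 c1 nz unfolding G_def f_def by blast
  qed
qed

end
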